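(* Let $M$ be a matroid, let $\mathcal{T}$ be a tangle of $M$, let $X\subseteq E(M)$ be independent in the tangle matroid $M(\mathcal{T})$, and let $e\in X$. Then $X\setminus e$ is independent in the tangle matroid $(M\setminus e)(\mathcal{T}')$, where $\mathcal{T}'$ is the tangle of $M\setminus e$ inherited from $\mathcal{T}$.
   Context: $\lambda_M(X) = \rank_M(X) + \rank_M(E(M)\setminus X) - \rank(M)$. A tangle of order $\theta$ of $M$ is a collection $\mathcal{T}$ of subsets of $E(M)$ such that: (i) $\lambda_M(X)<\theta$ for all $X\in\mathcal{T}$; (ii) for every $X\subseteq E(M)$ with $\lambda_M(X)<\theta$, either $X\in\mathcal{T}$ or $E(M)\setminus X\in\mathcal{T}$; (iii) if $X,Y,Z\in\mathcal{T}$ then $X\cup Y\cup Z\neq E(M)$; (iv) $E(M)\setminus\{e\}\notin\mathcal{T}$ for every $e\in E(M)$. The tangle matroid $M(\mathcal{T})$ has rank function $\rank_{\mathcal{T}}(X) = \min\{\lambda_M(Y): X\subseteq Y\in\mathcal{T}\}$ if some member of $\mathcal{T}$ contains $X$, and $\theta$ otherwise. For a minor $N$ of $M$ with $S=E(M)\setminus E(N)$, the tangle of $N$ inherited from $\mathcal{T}$ is $\{X\setminus S: X\in\mathcal{T},\ \lambda_N(X\setminus S)<\theta-|S|\}$, a tangle of $N$ of order $\theta-|S|$. *)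

theory Defs
  imports Main
begin

definition matroid :: "'a set \<Rightarrow> ('a set \<Rightarrow> nat) \<Rightarrow> bool" where
  "matroid E r \<longleftrightarrow> finite E
     \<and> (\<forall>X. X \<subseteq> E \<longrightarrow> r X \<le> card X)
     \<and> (\<forall>X Y. X \<subseteq> Y \<and> Y \<subseteq> E \<longrightarrow> r X \<le> r Y)
     \<and> (\<forall>X Y. X \<subseteq> E \<and> Y \<subseteq> E \<longrightarrow> r (X \<union> Y) + r (X \<inter> Y) \<le> r X + r Y)"

text \<open>Deletion of e is represented as the pair (E - {e}, r) (rank restricted).\<close>

definition conn :: "'a set \<Rightarrow> ('a set \<Rightarrow> nat) \<Rightarrow> 'a set \<Rightarrow> nat" where
  "conn E r X = r X + r (E - X) - r E"

definition is_tangle :: "'a set \<Rightarrow> ('a set \<Rightarrow> nat) \<Rightarrow> nat \<Rightarrow> 'a set set \<Rightarrow> bool" where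
  "is_tangle E r \<theta> T \<longleftrightarrow>
     (\<forall>X\<in>T. X \<subseteq> E)
     \<and> (\<forall>X\<in>T. conn E r X < \<theta>)
     \<and> (\<forall>X. X \<subseteq> E \<and> conn E r X < \<theta> \<longrightarrow> X \<in> T \<or> E - X \<in> T)
     \<and> (\<forall>X\<in>T. \<forall>Y\<in>T. \<forall>Z\<in>T. X \<union> Y \<union> Z \<noteq> E)
     \<and> (\<forall>e\<in>E. E - {e} \<notin> T)"

definition tangle_rank :: "'a set \<Rightarrow> ('a set \<Rightarrow> nat) \<Rightarrow> nat \<Rightarrow> 'a set set \<Rightarrow> 'a set \<Rightarrow> nat" where
  "tangle_rank E r \<theta> T X =
     (if \<exists>Y\<in>T. X \<subseteq> Y then Min {conn E r Y | Y. Y \<in> T \<and> X \<subseteq> Y} else \<theta>)"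

definition tangle_indep :: "'a set \<Rightarrow> ('a set \<Rightarrow> nat) \<Rightarrow> nat \<Rightarrow> 'a set set \<Rightarrow> 'a set \<Rightarrow> bool" where
  "tangle_indep E r \<theta> T X \<longleftrightarrow> X \<subseteq> E \<and> tangle_rank E r \<theta> T X = card X"

definition inherited_tangle ::
  "'a set \<Rightarrow> nat \<Rightarrow> 'a set set \<Rightarrow> 'a set \<Rightarrow> ('a set \<Rightarrow> nat) \<Rightarrow> 'a set set" where
  "inherited_tangle E \<theta> T E' r' =
     {X - (E - E') | X. X \<in> T \<and> conn E' r' (X - (E - E')) < \<theta> - card (E - E')}"

end

theory Submission
  imports Defs
begin

text \<open>Let k = |X| be the tangle rank of X and T' the inherited tangle of M \<setminus> e.
  Lower bound: a member Y - e of T' containing X - e comes from some Y in T; adding e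
  raises the connectivity by at most one, so Y + e is still small, lies in T (otherwise
  Y, E - (Y + e) and {e} would cover E) and contains X, whence the connectivity of
  Y - e in M \<setminus> e is at least k - 1. Upper bound: growing a member of T one element at
  a time shows that X - e lies in some Y in T with \<lambda>(Y) \<le> k - 1. Then e \<notin> Y, as
  otherwise Y would witness a tangle rank of X below k, and deleting e does not
  increase \<lambda>(Y), so Y is in T'.\<close>

lemma matroid_finite: "matroid E r \<Longrightarrow> finite E"
  by (simp add: matroid_def)

lemma matroid_rank_le_card: "matroid E r \<Longrightarrow> X \<subseteq> E \<Longrightarrow> r X \<le> card X"
  by (simp add: matroid_def)

lemma matroid_rank_mono: "matroid E r \<Longrightarrow> X \<subseteq> Y \<Longrightarrow> Y \<subseteq> E \<Longrightarrow> r X \<le> r Y"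
  by (auto simp: matroid_def)

lemma matroid_rank_submod:
  "matroid E r \<Longrightarrow> X \<subseteq> E \<Longrightarrow> Y \<subseteq> E \<Longrightarrow> r (X \<union> Y) + r (X \<inter> Y) \<le> r X + r Y"
  by (auto simp: matroid_def)

lemma matroid_rank_insert_le:
  assumes M: "matroid E r" and "f \<in> E" "Y \<subseteq> E"
  shows "r (insert f Y) \<le> r Y + 1"
proof -
  have "r (Y \<union> {f}) + r (Y \<inter> {f}) \<le> r Y + r {f}"
    using matroid_rank_submod[OF M, of Y "{f}"] assms by simp
  moreover have "r {f} \<le> 1"
    using matroid_rank_le_card[OF M, of "{f}"] assms by simp
  ultimately show ?thesis by simp
qed

lemma conn_empty: "matroid E r \<Longrightarrow> conn E r {} = 0"
  using matroid_rank_le_card[of E r "{}"] by (simp add: conn_def)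

lemma conn_insert_le:
  assumes M: "matroid E r" and "f \<in> E" "Y \<subseteq> E"
  shows "conn E r (insert f Y) \<le> conn E r Y + 1"
proof -
  have "r (insert f Y) \<le> r Y + 1"
    using matroid_rank_insert_le[OF M] assms by blast
  moreover have "r (E - insert f Y) \<le> r (E - Y)"
    by (rule matroid_rank_mono[OF M]) auto
  ultimately show ?thesis unfolding conn_def by linarith
qed

lemma conn_delete_le:
  assumes M: "matroid E r" and e: "e \<in> E" and Y: "Y \<subseteq> E - {e}"
  shows "conn (E - {e}) r Y \<le> conn E r Y"
proof -
  have "r ((E - Y) \<union> (E - {e})) + r ((E - Y) \<inter> (E - {e})) \<le> r (E - Y) + r (E - {e})"
    using matroid_rank_submod[OF M] by auto
  moreover have "(E - Y) \<union> (E - {e}) = E" "(E - Y) \<inter> (E - {e}) = E - {e} - Y"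
    using Y e by auto
  ultimately show ?thesis unfolding conn_def by simp
qed

lemma conn_insert_le_conn_delete:
  assumes M: "matroid E r" and e: "e \<in> E" and Y: "Y \<subseteq> E"
  shows "conn E r (insert e Y) \<le> conn (E - {e}) r (Y - {e}) + 1"
proof -
  have "Y - {e} \<subseteq> E"
    using Y by blast
  then have "r (insert e Y) \<le> r (Y - {e}) + 1"
    using matroid_rank_insert_le[OF M e, of "Y - {e}"] by simp
  moreover have "r (E - {e}) \<le> r E"
    by (rule matroid_rank_mono[OF M]) auto
  moreover have "E - {e} - (Y - {e}) = E - insert e Y"
    by auto
  ultimately show ?thesis unfolding conn_def by simp
qed

lemma tangle_subset: "is_tangle E r \<theta> T \<Longrightarrow> X \<in> T \<Longrightarrow> X \<subseteq> E"
  by (simp add: is_tangle_def)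

lemma tangle_conn_less: "is_tangle E r \<theta> T \<Longrightarrow> \<forall>X\<in>T. conn E r X < \<theta>"
  by (simp add: is_tangle_def)

lemma tangle_mem_or_compl:
  "is_tangle E r \<theta> T \<Longrightarrow> X \<subseteq> E \<Longrightarrow> conn E r X < \<theta> \<Longrightarrow> X \<in> T \<or> E - X \<in> T"
  by (simp add: is_tangle_def)

lemma tangle_no_cover:
  "is_tangle E r \<theta> T \<Longrightarrow> X \<in> T \<Longrightarrow> Y \<in> T \<Longrightarrow> Z \<in> T \<Longrightarrow> X \<union> Y \<union> Z \<noteq> E"
  unfolding is_tangle_def by (elim conjE) (drule bspec, assumption)+

lemma tangle_delete_singleton_not_mem:
  "is_tangle E r \<theta> T \<Longrightarrow> f \<in> E \<Longrightarrow> E - {f} \<notin> T"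
  unfolding is_tangle_def by (elim conjE) (drule bspec)

lemma tangle_singleton_mem:
  assumes M: "matroid E r" and T: "is_tangle E r \<theta> T" and f: "f \<in> E" and "1 < \<theta>"
  shows "{f} \<in> T"
proof -
  have "conn E r {f} < \<theta>"
    using conn_insert_le[OF M f, of "{}"] conn_empty[OF M] \<open>1 < \<theta>\<close> by simp
  then show ?thesis
    using tangle_mem_or_compl[OF T, of "{f}"] tangle_delete_singleton_not_mem[OF T f] f by blast
qed

lemma tangle_insert_mem:
  assumes M: "matroid E r" and T: "is_tangle E r \<theta> T"
    and Y: "Y \<in> T" and f: "f \<in> E" and "1 < \<theta>" and small: "conn E r (insert f Y) < \<theta>"
  shows "insert f Y \<in> T"
proof (rule ccontr)
  assume "insert f Y \<notin> T"
  moreover have "Y \<subseteq> E"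
    using tangle_subset[OF T Y] .
  ultimately have "E - insert f Y \<in> T"
    using tangle_mem_or_compl[OF T _ small] f by blast
  moreover have "{f} \<in> T"
    using tangle_singleton_mem[OF M T f \<open>1 < \<theta>\<close>] .
  moreover have "Y \<union> (E - insert f Y) \<union> {f} = E"
    using \<open>Y \<subseteq> E\<close> f by auto
  ultimately show False
    using tangle_no_cover[OF T Y] by blast
qed

lemma tangle_superset_conn_le_card:
  assumes M: "matroid E r" and T: "is_tangle E r \<theta> T" and "Z \<subseteq> E" "card Z < \<theta>"
  shows "\<exists>Y\<in>T. Z \<subseteq> Y \<and> conn E r Y \<le> card Z"
proof -
  have "finite Z"
    using assms(3) matroid_finite[OF M] finite_subset by blast
  then show ?thesis
    using assms(3,4)
  proof (induction Z rule: finite_induct)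
    case empty
    have "E \<notin> T"
      using tangle_no_cover[OF T, of E E E] by blast
    then have "{} \<in> T"
      using tangle_mem_or_compl[OF T, of "{}"] conn_empty[OF M] empty by simp
    then show ?case
      using conn_empty[OF M] by auto
  next
    case (insert f Z)
    then obtain Y where Y: "Y \<in> T" "Z \<subseteq> Y" "conn E r Y \<le> card Z"
      by auto
    have "Y \<subseteq> E"
      using tangle_subset[OF T Y(1)] .
    then have small: "conn E r (insert f Y) \<le> card (insert f Z)"
      using conn_insert_le[OF M, of f Y] Y(3) insert by simp
    have "insert f Y \<in> T"
      using tangle_insert_mem[OF M T Y(1)] small insert by simp
    then show ?case
      using Y(2) small by blast
  qed
qed

lemma tangle_rank_eq_Min:
  "Y \<in> T \<Longrightarrow> X \<subseteq> Y \<Longrightarrow>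
    tangle_rank E r \<theta> T X = Min {conn E r Y | Y. Y \<in> T \<and> X \<subseteq> Y}"
  unfolding tangle_rank_def by auto

lemma finite_conns_bounded:
  "\<forall>Y\<in>T. conn E r Y < \<theta> \<Longrightarrow> finite {conn E r Y | Y. Y \<in> T \<and> P Y}"
  by (rule finite_subset[of _ "{..<\<theta>}"]) auto

lemma tangle_rank_le_conn:
  assumes "\<forall>Y\<in>T. conn E r Y < \<theta>" and "Y \<in> T" "X \<subseteq> Y"
  shows "tangle_rank E r \<theta> T X \<le> conn E r Y"
proof -
  have "Min {conn E r Y | Y. Y \<in> T \<and> X \<subseteq> Y} \<le> conn E r Y"
    using finite_conns_bounded[OF assms(1)] assms(2,3) by (intro Min_le) blast+
  then show ?thesis
    using tangle_rank_eq_Min[OF assms(2,3)] by simp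
qed

lemma tangle_rank_le_order:
  assumes "\<forall>Y\<in>T. conn E r Y < \<theta>"
  shows "tangle_rank E r \<theta> T X \<le> \<theta>"
proof (cases "\<exists>Y\<in>T. X \<subseteq> Y")
  case True
  then obtain Y where "Y \<in> T" "X \<subseteq> Y" by blast
  moreover have "conn E r Y < \<theta>"
    using assms \<open>Y \<in> T\<close> by blast
  moreover have "tangle_rank E r \<theta> T X \<le> conn E r Y"
    using tangle_rank_le_conn[OF assms] \<open>Y \<in> T\<close> \<open>X \<subseteq> Y\<close> .
  ultimately show ?thesis
    by linarith
qed (simp add: tangle_rank_def)

lemma tangle_rank_ge:
  assumes "\<forall>Y\<in>T. conn E r Y < \<theta>" and "k \<le> \<theta>"
    and "\<And>Y. Y \<in> T \<Longrightarrow> X \<subseteq> Y \<Longrightarrow> k \<le> conn E r Y"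
  shows "k \<le> tangle_rank E r \<theta> T X"
proof (cases "\<exists>Y\<in>T. X \<subseteq> Y")
  case True
  then obtain Y where "Y \<in> T" "X \<subseteq> Y" by blast
  let ?S = "{conn E r Y | Y. Y \<in> T \<and> X \<subseteq> Y}"
  have "?S \<noteq> {}" "\<forall>c\<in>?S. k \<le> c"
    using \<open>Y \<in> T\<close> \<open>X \<subseteq> Y\<close> assms(3) by blast+
  then have "k \<le> Min ?S"
    using Min_ge_iff[OF finite_conns_bounded[OF assms(1)]] by blast
  then show ?thesis
    using tangle_rank_eq_Min[OF \<open>Y \<in> T\<close> \<open>X \<subseteq> Y\<close>] by simp
qed (simp add: tangle_rank_def assms(2))

lemma inherited_tangle_delete:
  "e \<in> E \<Longrightarrow> inherited_tangle E \<theta> T (E - {e}) r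
    = {Y - {e} | Y. Y \<in> T \<and> conn (E - {e}) r (Y - {e}) < \<theta> - 1}"
  unfolding inherited_tangle_def by (simp add: Diff_Diff_Int insert_absorb)

lemma inherited_tangle_delete_conn_less:
  "e \<in> E \<Longrightarrow> \<forall>Y\<in>inherited_tangle E \<theta> T (E - {e}) r. conn (E - {e}) r Y < \<theta> - 1"
  by (auto simp: inherited_tangle_delete)

lemma tangle_rank_delete_ge:
  assumes M: "matroid E r" and T: "is_tangle E r \<theta> T" and e: "e \<in> E"
  shows "tangle_rank E r \<theta> T X - 1
    \<le> tangle_rank (E - {e}) r (\<theta> - 1) (inherited_tangle E \<theta> T (E - {e}) r) (X - {e})"
proof (rule tangle_rank_ge[OF inherited_tangle_delete_conn_less[OF e]])
  show "tangle_rank E r \<theta> T X - 1 \<le> \<theta> - 1"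
    using tangle_rank_le_order[OF tangle_conn_less[OF T]] by (simp add: diff_le_mono)
next
  fix Y' assume "Y' \<in> inherited_tangle E \<theta> T (E - {e}) r" "X - {e} \<subseteq> Y'"
  then obtain Y where Y: "Y \<in> T" "Y' = Y - {e}" "conn (E - {e}) r Y' < \<theta> - 1"
    by (auto simp: inherited_tangle_delete[OF e])
  have "Y \<subseteq> E"
    using tangle_subset[OF T Y(1)] .
  then have bound: "conn E r (insert e Y) \<le> conn (E - {e}) r Y' + 1"
    using conn_insert_le_conn_delete[OF M e] Y(2) by blast
  then have "insert e Y \<in> T"
    using tangle_insert_mem[OF M T Y(1) e] Y(3) by linarith
  moreover have "X \<subseteq> insert e Y"
    using \<open>X - {e} \<subseteq> Y'\<close> Y(2) by blast
  ultimately have "tangle_rank E r \<theta> T X \<le> conn E r (insert e Y)"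
    using tangle_rank_le_conn[OF tangle_conn_less[OF T]] by blast
  then show "tangle_rank E r \<theta> T X - 1 \<le> conn (E - {e}) r Y'"
    using bound by linarith
qed

lemma tangle_rank_delete_le:
  assumes M: "matroid E r" and T: "is_tangle E r \<theta> T" and X: "X \<subseteq> E" and e: "e \<in> X"
    and indep: "tangle_rank E r \<theta> T X = card X"
  shows "tangle_rank (E - {e}) r (\<theta> - 1) (inherited_tangle E \<theta> T (E - {e}) r) (X - {e})
    \<le> card X - 1"
proof -
  let ?T' = "inherited_tangle E \<theta> T (E - {e}) r"
  have eE: "e \<in> E" using X e by blast
  note bounded = tangle_conn_less[OF T]
  have card_X: "card (X - {e}) = card X - 1" "1 \<le> card X"
    using e finite_subset[OF X matroid_finite[OF M]] by (auto simp: Suc_le_eq card_gt_0_iff)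
  consider "card X = \<theta>" | "card X < \<theta>"
    using tangle_rank_le_order[OF bounded, of X] indep by linarith
  then show ?thesis
  proof cases
    case 1
    then show ?thesis
      using tangle_rank_le_order[OF inherited_tangle_delete_conn_less[OF eE]] by simp
  next
    case 2
    then have "X - {e} \<subseteq> E" "card (X - {e}) < \<theta>"
      using X card_X(1) by auto
    then obtain Y where Y: "Y \<in> T" "X - {e} \<subseteq> Y" "conn E r Y \<le> card X - 1"
      using tangle_superset_conn_le_card[OF M T] card_X(1) by metis
    have "e \<notin> Y"
    proof
      assume "e \<in> Y"
      then have "X \<subseteq> Y"
        using Y(2) by blast
      then have "card X \<le> conn E r Y"
        using tangle_rank_le_conn[OF bounded Y(1) \<open>X \<subseteq> Y\<close>] indep by simp
      then show False
        using Y(3) card_X(2) by linarith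
    qed
    moreover have "Y \<subseteq> E"
      using tangle_subset[OF T Y(1)] .
    ultimately have "Y \<subseteq> E - {e}" "Y - {e} = Y"
      by auto
    then have small: "conn (E - {e}) r (Y - {e}) \<le> card X - 1"
      using conn_delete_le[OF M eE, of Y] Y(3) by simp
    then have "conn (E - {e}) r (Y - {e}) < \<theta> - 1"
      using 2 card_X(2) by linarith
    then have "Y \<in> ?T'"
      unfolding inherited_tangle_delete[OF eE] using Y(1) \<open>Y - {e} = Y\<close> by blast
    then have "tangle_rank (E - {e}) r (\<theta> - 1) ?T' (X - {e}) \<le> conn (E - {e}) r Y"
      using tangle_rank_le_conn[OF inherited_tangle_delete_conn_less[OF eE]] Y(2) by blast
    then show ?thesis
      using small \<open>Y - {e} = Y\<close> by simp
  qed
qed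

theorem lemma2p32:
  fixes E :: "'a set" and r :: "'a set \<Rightarrow> nat" and \<theta> :: nat
    and T :: "'a set set" and X :: "'a set" and e :: 'a
  assumes "matroid E r"
    and "is_tangle E r \<theta> T"
    and "X \<subseteq> E"
    and "tangle_indep E r \<theta> T X"
    and "e \<in> X"
  shows "tangle_indep (E - {e}) r (\<theta> - 1)
           (inherited_tangle E \<theta> T (E - {e}) r) (X - {e})"
proof -
  let ?rank' = "tangle_rank (E - {e}) r (\<theta> - 1) (inherited_tangle E \<theta> T (E - {e}) r)"
  have rank_X: "tangle_rank E r \<theta> T X = card X"
    using assms(4) by (simp add: tangle_indep_def)
  have "card X - 1 \<le> ?rank' (X - {e})"
    using tangle_rank_delete_ge[OF assms(1,2), of e X] assms(3,5) rank_X by auto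
  moreover have "?rank' (X - {e}) \<le> card X - 1"
    using tangle_rank_delete_le[OF assms(1,2,3,5) rank_X] .
  moreover have "card (X - {e}) = card X - 1"
    using assms(5) by simp
  ultimately show ?thesis
    unfolding tangle_indep_def using assms(3) by auto
qed

end
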